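(* Let $X$ be a real Banach space with dual $X^*$ and let $T:X\rightrightarrows X^*$ be a set-valued map. If $-T$ is pseudo-monotone, then $T$ is lower sign-continuous at every point of $\operatorname{int}(\operatorname{dom}(T))$.
   Context: $\operatorname{dom}(T)=\{x\in X: T(x)\neq\emptyset\}$ and $\langle\cdot,\cdot\rangle$ is the duality pairing. A set-valued map $S:X\rightrightarrows X^*$ is pseudo-monotone if for all $x,y\in X$: whenever there exists $x^*\in S(x)$ with $\langle x^*,y-x\rangle\geq 0$, then $\langle y^*,x-y\rangle\leq 0$ for all $y^*\in S(y)$ (here $-T$ is the map $x\mapsto\{-x^*: x^*\in T(x)\}$). $T$ is lower sign-continuous at $x\in\operatorname{dom}(T)$ if for every $v\in X$: if $\inf_{x_t^*\in T(x_t)}\langle x_t^*,v\rangle\geq 0$ for all $t\in\,]0,1[$, where $x_t=x+tv$, then $\inf_{x^*\in T(x)}\langle x^*,v\rangle\geq 0$. *)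

theory Defs
  imports "HOL-Analysis.Analysis"
begin

(* Dual space X* = bounded linear functionals (blinfun); pairing = application. *)

definition dom_sv :: "('a \<Rightarrow> 'b set) \<Rightarrow> 'a set" where
  "dom_sv T = {x. T x \<noteq> {}}"

definition neg_sv :: "('a \<Rightarrow> ('a::real_normed_vector \<Rightarrow>\<^sub>L real) set) \<Rightarrow> 'a \<Rightarrow> ('a \<Rightarrow>\<^sub>L real) set" where
  "neg_sv T = (\<lambda>x. uminus ` T x)"

definition pseudo_monotone :: "('a::real_normed_vector \<Rightarrow> ('a \<Rightarrow>\<^sub>L real) set) \<Rightarrow> bool" where
  "pseudo_monotone S \<longleftrightarrow>
     (\<forall>x y. (\<exists>xs\<in>S x. blinfun_apply xs (y - x) \<ge> 0) \<longrightarrow>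
            (\<forall>ys\<in>S y. blinfun_apply ys (x - y) \<le> 0))"

(* Infima taken in the extended reals (inf of empty set = +infinity). *)
definition lower_sign_continuous_at ::
  "('a::real_normed_vector \<Rightarrow> ('a \<Rightarrow>\<^sub>L real) set) \<Rightarrow> 'a \<Rightarrow> bool" where
  "lower_sign_continuous_at T x \<longleftrightarrow>
     (\<forall>v. (\<forall>t\<in>{0<..<1::real}. (INF xs\<in>T (x + t *\<^sub>R v). ereal (blinfun_apply xs v)) \<ge> 0)
          \<longrightarrow> (INF xs\<in>T x. ereal (blinfun_apply xs v)) \<ge> 0)"

end

theory Submission
  imports Defs
begin

text \<open>Pseudo-monotonicity of \<open>-T\<close> carries the sign of \<open>\<langle>y\<^sup>*, v\<rangle>\<close> at a single
point \<open>y = x + t v\<close>, \<open>t > 0\<close>, back to every \<open>x\<^sup>* \<in> T x\<close>. Since \<open>x\<close> is interior to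
\<open>dom T\<close>, some point \<open>x + t v\<close> with \<open>0 < t < 1\<close> has \<open>T (x + t v) \<noteq> {}\<close>, so the
hypothesis of lower sign-continuity at that one point already suffices.\<close>

lemma pseudo_monotone_neg_svD:
  assumes "pseudo_monotone (neg_sv T)"
    and "ys \<in> T y" and "blinfun_apply ys (y - x) \<ge> 0"
    and "xs \<in> T x"
  shows "blinfun_apply xs (y - x) \<ge> 0"
proof -
  have "-ys \<in> neg_sv T y" "-xs \<in> neg_sv T x"
    using assms(2,4) by (simp_all add: neg_sv_def)
  moreover have "blinfun_apply (-ys) (x - y) \<ge> 0"
    using assms(3) by (simp add: blinfun.minus_left blinfun.diff_right)
  ultimately have "blinfun_apply (-xs) (y - x) \<le> 0"
    using assms(1) unfolding pseudo_monotone_def by blast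
  then show ?thesis
    by (simp add: blinfun.minus_left)
qed

lemma pseudo_monotone_neg_sv_ray:
  assumes "pseudo_monotone (neg_sv T)" and "t > 0"
    and "ys \<in> T (x + t *\<^sub>R v)" and "blinfun_apply ys v \<ge> 0"
    and "xs \<in> T x"
  shows "blinfun_apply xs v \<ge> 0"
proof -
  have "blinfun_apply ys ((x + t *\<^sub>R v) - x) \<ge> 0"
    using assms(2,4) by (simp add: blinfun.scaleR_right)
  then have "t * blinfun_apply xs v \<ge> 0"
    using pseudo_monotone_neg_svD[OF assms(1,3) _ assms(5)] by (simp add: blinfun.scaleR_right)
  then show ?thesis
    using assms(2) by (simp add: zero_le_mult_iff)
qed

lemma interior_imp_ray_point:
  fixes x v :: "'a::real_normed_vector"
  assumes "x \<in> interior S"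
  obtains t where "t \<in> {0<..<1}" and "x + t *\<^sub>R v \<in> S"
proof -
  have "((\<lambda>t. x + t *\<^sub>R v) \<longlongrightarrow> x) (at_right 0)"
    by (auto intro!: tendsto_eq_intros)
  then have "\<forall>\<^sub>F t in at_right 0. x + t *\<^sub>R v \<in> interior S"
    using assms by (rule topological_tendstoD[OF _ open_interior])
  moreover have "\<forall>\<^sub>F t in at_right (0::real). t \<in> {0<..<1}"
    by (auto simp: eventually_at_right_field intro: exI[of _ 1])
  ultimately have "\<forall>\<^sub>F t in at_right 0. t \<in> {0<..<1} \<and> x + t *\<^sub>R v \<in> S"
    by eventually_elim (auto dest: interior_subset[THEN subsetD])
  then show ?thesis
    using that eventually_happens'[OF trivial_limit_at_right_real] by blast
qed

lemma INF_ereal_nonneg_iff: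
  "(INF xs\<in>A. ereal (f xs)) \<ge> 0 \<longleftrightarrow> (\<forall>xs\<in>A. f xs \<ge> 0)"
  by (simp add: le_INF_iff)

theorem proposition6p1:
  fixes T :: "'a::banach \<Rightarrow> ('a \<Rightarrow>\<^sub>L real) set"
  assumes "pseudo_monotone (neg_sv T)"
  shows "\<forall>x\<in>interior (dom_sv T). lower_sign_continuous_at T x"
proof (intro ballI, unfold lower_sign_continuous_at_def INF_ereal_nonneg_iff, intro allI impI)
  fix x v
  assume x: "x \<in> interior (dom_sv T)"
    and sign: "\<forall>t\<in>{0<..<1::real}. \<forall>ys\<in>T (x + t *\<^sub>R v). blinfun_apply ys v \<ge> 0"
  obtain t where t: "t \<in> {0<..<1}" and "x + t *\<^sub>R v \<in> dom_sv T"
    using x by (rule interior_imp_ray_point)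
  then obtain ys where ys: "ys \<in> T (x + t *\<^sub>R v)"
    by (auto simp: dom_sv_def)
  show "\<forall>xs\<in>T x. blinfun_apply xs v \<ge> 0"
    using pseudo_monotone_neg_sv_ray[OF assms _ ys] sign t ys by auto
qed

end
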